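(* Consider the online bin covering problem with advice, and the advice strategy $\mathsf{DH}^{b+\lg n}_4$ (with $k=4$) described in the context, where the oracle supplies exact values of $m$ and $x_m$ (with $m$ chosen by the oracle, as described, to maximize the number of bins covered by the strategy). Then for every input sequence $\sigma$ of length $n$, $$|\mathsf{DH}^{b+\lg n}_4(\sigma)| \ge \frac{2}{3}\,|\mathsf{OPT}(\sigma)| - \frac{173}{60},$$ where $|\mathsf{OPT}(\sigma)|$ is the maximum number of bins that can be covered with the items of $\sigma$ and $|\mathsf{DH}^{b+\lg n}_4(\sigma)|$ is the number of bins covered by the strategy.
   Context: Bin covering: given a sequence $\sigma$ of items with rational sizes, each item size $v$ satisfying $0<v<1$, partition the items into bins; the load of a bin is the sum of its item sizes and a bin is covered if its load is at least $1$; the goal is to maximize the number of covered bins. Online: items arrive one by one and each must be irrevocably placed in a bin (existing or newly opened) before the next arrives. Advice model: an oracle knowing the entire input and the strategy writes a bit string (using a self-delimiting encoding) on an advice tape which the strategy may read. Dual Next Fit (DNF) on a stream of items: keep one active bin, put each item into it, and when it becomes covered close it and open a new empty active bin. Fix an integer $k\ge 2$. For an integer $2\le t\le k$, an item $v$ is a $t$-item if $1/t\le v<1/(t-1)$; an item $v<1/k$ is small. Let $x_1\ge x_2\ge\dots\ge x_n$ be the items of $\sigma$ sorted in non-increasing order. Strategy $\mathsf{DH}^{b+\lg n}_k$: it first reads from the advice an integer $m$ and the value $x_m$ (the $m$-th largest item of $\sigma$). It opens $m$ critical bins, each with an initial virtual load of $x_m$; it also opens one $t$-bin for each $t\in\{2,\dots,k\}$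 and one small bin. The virtual load of a critical bin equals the sum of its small items plus either $x_m$ (if it contains no item of size $\ge x_m$ yet) or the actual size of the item of size $\ge x_m$ it contains. When an item $v$ arrives: (1) if $x_m\le v$, place $v$ in the next critical bin that does not yet contain such a (2-)item and update its virtual load; (2) if $1/k\le v<x_m$ and $v$ is a $t$-item, place $v$ in the current $t$-bin using DNF (when it becomes covered, close it and open a new $t$-bin); (3) if $v<1/k$, place $v$ in the next critical bin whose virtual load is still below $1$ and update its virtual load; if all critical bins have virtual load at least $1$, place $v$ in the small bin using DNF (when it becomes covered, close it and open a new small bin). The oracle chooses $m$ by emulating the strategy for every integer $0\le m\le n_2$, where $n_2$ is the number of $2$-items in $\sigma$, and reports a value of $m$ for which the strategy covers as many bins as possible, together with the exact value $x_m$. *)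

theory Defs
  imports Main "HOL.Rat"
begin

definition covered_bins :: "rat list \<Rightarrow> (nat \<Rightarrow> nat) \<Rightarrow> nat" where
  "covered_bins xs f =
     card {b. 1 \<le> (\<Sum>i\<in>{i. i < length xs \<and> f i = b}. xs ! i)}"

definition opt_cover :: "rat list \<Rightarrow> nat" where
  "opt_cover xs = Max {c. \<exists>f. c = covered_bins xs f}"

fun upd_first :: "('a \<Rightarrow> bool) \<Rightarrow> ('a \<Rightarrow> 'a) \<Rightarrow> 'a list \<Rightarrow> 'a list" where
  "upd_first P g [] = []"
| "upd_first P g (x # xs) = (if P x then g x # xs else x # upd_first P g xs)"

text \<open>A critical bin is a pair (big, smalls): the item of size at least x_m
it contains (if any) and the total size of its small items.\<close>

definition vload :: "rat \<Rightarrow> rat option \<times> rat \<Rightarrow> rat" where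
  "vload xm b = snd b + (case fst b of None \<Rightarrow> xm | Some y \<Rightarrow> y)"

definition aload :: "rat option \<times> rat \<Rightarrow> rat" where
  "aload b = snd b + (case fst b of None \<Rightarrow> 0 | Some y \<Rightarrow> y)"

text \<open>Dual Next Fit state: (load of the active bin, number of closed = covered bins).\<close>

definition dnf_add :: "rat \<Rightarrow> rat \<times> nat \<Rightarrow> rat \<times> nat" where
  "dnf_add v s = (if 1 \<le> fst s + v then (0, Suc (snd s)) else (fst s + v, snd s))"

text \<open>The class t of an item v with 0 < v < 1 is the t with 1/t \<le> v < 1/(t-1),
i.e. t = ceiling (1/v).\<close>

definition item_class :: "rat \<Rightarrow> nat" where
  "item_class v = nat \<lceil>1 / v\<rceil>"

type_synonym dh_state = "(rat option \<times> rat) list \<times> (nat \<Rightarrow> rat \<times> nat) \<times> (rat \<times> nat)"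

definition dh_step :: "nat \<Rightarrow> rat \<Rightarrow> rat \<Rightarrow> dh_state \<Rightarrow> dh_state" where
  "dh_step k xm v st = (case st of (cr, tb, sb) \<Rightarrow>
     if xm \<le> v \<and> (\<exists>b\<in>set cr. fst b = None)
       then (upd_first (\<lambda>b. fst b = None) (\<lambda>b. (Some v, snd b)) cr, tb, sb)
     else if 1 / of_nat k \<le> v
       then (cr, tb(item_class v := dnf_add v (tb (item_class v))), sb)
     else if (\<exists>b\<in>set cr. vload xm b < 1)
       then (upd_first (\<lambda>b. vload xm b < 1) (\<lambda>b. (fst b, snd b + v)) cr, tb, sb)
     else (cr, tb, dnf_add v sb))"

text \<open>x_m, the m-th largest item (1-based); for m = 0 we use the convention
x_0 = 1 (no critical bins, every item of size \<ge> 1/k goes to its t-bin).\<close>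

definition xm_of :: "rat list \<Rightarrow> nat \<Rightarrow> rat" where
  "xm_of xs m = (if m = 0 then 1 else rev (sort xs) ! (m - 1))"

definition dh_run :: "nat \<Rightarrow> rat list \<Rightarrow> nat \<Rightarrow> nat" where
  "dh_run k xs m =
     (case fold (dh_step k (xm_of xs m)) xs (replicate m (None, 0), (\<lambda>_. (0, 0)), (0, 0)) of
       (cr, tb, sb) \<Rightarrow>
         (\<Sum>t\<in>{2..k}. snd (tb t)) + snd sb + length (filter (\<lambda>b. 1 \<le> aload b) cr))"

definition n_two_items :: "rat list \<Rightarrow> nat" where
  "n_two_items xs = length (filter (\<lambda>v. 1/2 \<le> v) xs)"

definition dh_advice :: "nat \<Rightarrow> rat list \<Rightarrow> nat" where
  "dh_advice k xs = Max (dh_run k xs ` {0..n_two_items xs})"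

end

theory Submission
  imports Defs
begin

(*
  Fix an optimal packing and call a covered bin tight if it contains one item of size at
  least 1/2 while all its other items are small and have total size below 1/4. Weighting
  2-, 3- and 4-items by 3/4, 1/2 and 3/8 and small items by their size, every covered bin
  has weight at least 1, except that a tight bin may fall short by 1/4 minus its small
  load. Hence OPT <= 3/4 n2 + 1/2 n3 + 3/8 n4 + q/4 + L, where q counts the tight bins and
  L is the small load outside them.

  Dual Next Fit covers one t-bin per t items of class t and one small bin per 5/4 of small
  load, so a run with m critical bins that all get covered covers about
  m/2 + n2/2 + n3/3 + n4/4 + 4/5 (S - m (5/4 - x_m)) bins, S being the total small load.
  Choose the largest m <= q for which all critical bins get covered. If m = q, then
  x_q > 3/4 because the big item of a tight bin exceeds 3/4, so the critical bins absorb
  at most q/2 of the small load. If m < q, a critical bin stays open in the run with m + 1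
  critical bins: apart from at most m small items that completed a critical bin, all small
  items lie in critical bins below the room 1 - x_(m+1), whereas at least q - m tight bins
  have a big item of size at most x_(m+1) and hence a small load of at least that room.
  This forces 4 L <= 3 m + 1 - q. Both cases give DH >= 2/3 OPT - 173/60.
*)

lemma upd_first_eq_update:
  assumes "\<exists>b\<in>set xs. P b"
  obtains k where "k < length xs" "P (xs ! k)" "\<forall>l<k. \<not> P (xs ! l)"
    "upd_first P g xs = xs[k := g (xs ! k)]"
  using assms
proof (induction xs arbitrary: thesis)
  case Nil
  then show ?case by simp
next
  case (Cons a xs)
  show ?case
  proof (cases "P a")
    case True
    then show ?thesis by (intro Cons.prems(1)[of 0]) auto
  next
    case False
    with Cons.prems(2) obtain k where "k < length xs" "P (xs ! k)" "\<forall>l<k. \<not> P (xs ! l)"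
        "upd_first P g xs = xs[k := g (xs ! k)]"
      using Cons.IH by auto
    with False show ?thesis
      by (intro Cons.prems(1)[of "Suc k"]) (auto simp: less_Suc_eq_0_disj)
  qed
qed

lemma sum_list_map_update:
  fixes h :: "'a \<Rightarrow> 'b :: ab_group_add"
  assumes "k < length xs"
  shows "(\<Sum>b\<leftarrow>xs[k := y]. h b) = (\<Sum>b\<leftarrow>xs. h b) - h (xs ! k) + h y"
  using assms by (induction xs arbitrary: k) (auto split: nat.split)

lemma length_filter_update:
  assumes "k < length xs"
  shows "length (filter P (xs[k := y])) + (if P (xs ! k) then 1 else 0)
       = length (filter P xs) + (if P y then 1 else 0)"
  using assms
proof (induction xs arbitrary: k)
  case (Cons a xs)
  then show ?case by (cases k) auto
qed simp

lemma length_filter_mono: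
  "(\<And>x. P x \<Longrightarrow> Q x) \<Longrightarrow> length (filter P xs) \<le> length (filter Q xs)"
  by (induction xs) auto

lemma card_filter_le_length_filter:
  assumes "A \<subseteq> {..<length xs}"
  shows "card {i\<in>A. P (xs ! i)} \<le> length (filter P xs)"
proof -
  have "card {i\<in>A. P (xs ! i)} \<le> card {i. i < length xs \<and> P (xs ! i)}"
    using assms by (intro card_mono) auto
  then show ?thesis by (simp add: length_filter_conv_card)
qed

lemma obtain_last_le:
  fixes P :: "nat \<Rightarrow> bool"
  assumes "P 0"
  obtains m where "m \<le> q" "P m" "m < q \<longrightarrow> \<not> P (Suc m)"
proof (induction q arbitrary: thesis)
  case 0
  then show ?case using assms by blast
next
  case (Suc q)
  show ?case
  proof (cases "P (Suc q)")
    case True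
    then show ?thesis by (intro Suc.prems) auto
  next
    case False
    then show ?thesis
      using Suc.IH[where thesis = thesis] Suc.prems by (metis le_SucI less_SucE)
  qed
qed

section \<open>Order statistics\<close>

lemma length_filter_xm_of_less:
  fixes xs :: "rat list"
  assumes "1 \<le> m" "m \<le> length xs"
  shows "length (filter (\<lambda>v. xm_of xs m < v) xs) < m"
proof -
  define ys where "ys = rev (sort xs)"
  have sorted: "sorted (rev ys)" and len: "length ys = length xs"
    unfolding ys_def by simp_all
  have x: "xm_of xs m = ys ! (m - 1)"
    unfolding xm_of_def ys_def using assms by simp
  have "\<forall>v\<in>set (drop (m - 1) ys). v \<le> ys ! (m - 1)"
    using sorted_rev_nth_mono[OF sorted] len assms by (fastforce simp: in_set_conv_nth)
  then have "filter (\<lambda>v. ys ! (m - 1) < v) (drop (m - 1) ys) = []"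
    by (auto simp: filter_empty_conv)
  then have "length (filter (\<lambda>v. ys ! (m - 1) < v) ys)
      = length (filter (\<lambda>v. ys ! (m - 1) < v) (take (m - 1) ys))"
    by (metis append_Nil2 append_take_drop_id filter_append)
  also have "\<dots> \<le> m - 1"
    by (metis length_filter_le length_take min.boundedE)
  finally show ?thesis
    using assms unfolding x ys_def by (simp add: rev_filter[symmetric] filter_sort)
qed

lemma le_length_filter_xm_of_le:
  fixes xs :: "rat list"
  assumes "1 \<le> m" "m \<le> length xs"
  shows "m \<le> length (filter (\<lambda>v. xm_of xs m \<le> v) xs)"
proof -
  define ys where "ys = rev (sort xs)"
  have sorted: "sorted (rev ys)" and len: "length ys = length xs"
    unfolding ys_def by simp_all
  have x: "xm_of xs m = ys ! (m - 1)"
    unfolding xm_of_def ys_def using assms by simp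
  have "\<forall>v\<in>set (take m ys). ys ! (m - 1) \<le> v"
    using sorted_rev_nth_mono[OF sorted] len assms by (fastforce simp: in_set_conv_nth)
  then have "m = length (filter (\<lambda>v. ys ! (m - 1) \<le> v) (take m ys))"
    using assms len by simp
  also have "\<dots> \<le> length (filter (\<lambda>v. ys ! (m - 1) \<le> v) ys)"
    by (metis append_take_drop_id filter_append le_add1 length_append)
  finally show ?thesis
    unfolding x ys_def by (simp add: rev_filter[symmetric] filter_sort)
qed

lemma le_xm_of:
  fixes xs :: "rat list"
  assumes "1 \<le> m" "m \<le> length (filter (\<lambda>v. c \<le> v) xs)"
  shows "c \<le> xm_of xs m"
proof (rule ccontr)
  assume "\<not> c \<le> xm_of xs m"
  then have "length (filter (\<lambda>v. c \<le> v) xs) \<le> length (filter (\<lambda>v. xm_of xs m < v) xs)"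
    by (intro length_filter_mono) auto
  moreover have "m \<le> length xs"
    using assms(2) length_filter_le order_trans by blast
  ultimately show False
    using length_filter_xm_of_less[OF assms(1)] assms(2) by fastforce
qed

lemma less_xm_of:
  fixes xs :: "rat list"
  assumes "1 \<le> m" "m \<le> length (filter (\<lambda>v. c < v) xs)"
  shows "c < xm_of xs m"
proof (rule ccontr)
  assume "\<not> c < xm_of xs m"
  then have "length (filter (\<lambda>v. c < v) xs) \<le> length (filter (\<lambda>v. xm_of xs m < v) xs)"
    by (intro length_filter_mono) auto
  moreover have "m \<le> length xs"
    using assms(2) length_filter_le order_trans by blast
  ultimately show False
    using length_filter_xm_of_less[OF assms(1)] assms(2) by fastforce
qed

lemma xm_of_mem:
  assumes "1 \<le> m" "m \<le> length xs"
  shows "xm_of xs m \<in> set xs"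
proof -
  have "rev (sort xs) ! (m - 1) \<in> set (rev (sort xs))"
    using assms by (intro nth_mem) simp
  then show ?thesis
    using assms(1) unfolding xm_of_def by simp
qed

lemma xm_of_bounds:
  fixes xs :: "rat list"
  assumes items: "\<forall>v\<in>set xs. 0 < v \<and> v < 1" and m: "m \<le> n_two_items xs"
  shows "1/2 \<le> xm_of xs m" "xm_of xs m \<le> 1" "m \<le> length (filter (\<lambda>v. xm_of xs m \<le> v) xs)"
proof -
  have len: "m \<le> length xs"
    using m length_filter_le order_trans unfolding n_two_items_def by blast
  show "1/2 \<le> xm_of xs m"
  proof (cases "m = 0")
    case True
    then show ?thesis by (simp add: xm_of_def)
  next
    case False
    have "m \<le> length (filter (\<lambda>v. 1/2 \<le> v) xs)"
      using m unfolding n_two_items_def .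
    from le_xm_of[OF _ this] False show ?thesis by simp
  qed
  show "xm_of xs m \<le> 1"
    using xm_of_mem[of m xs] items len unfolding xm_of_def by (cases "m = 0") force+
  show "m \<le> length (filter (\<lambda>v. xm_of xs m \<le> v) xs)"
    using le_length_filter_xm_of_le[of m xs] len by (cases "m = 0") auto
qed

section \<open>Item classes and Dual Next Fit\<close>

lemma item_class_eq_iff:
  assumes "0 < v" "2 \<le> t"
  shows "item_class v = t \<longleftrightarrow> 1 / of_nat t \<le> v \<and> v < 1 / (of_nat t - 1)"
proof -
  have "0 < \<lceil>1 / v\<rceil>"
    using assms(1) by simp
  then have "item_class v = t \<longleftrightarrow> \<lceil>1 / v\<rceil> = int t"
    unfolding item_class_def by (metis int_nat_eq nat_int order_less_imp_le)
  also have "\<dots> \<longleftrightarrow> of_nat t - 1 < 1 / v \<and> 1 / v \<le> of_nat t"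
    by (simp add: ceiling_eq_iff)
  also have "\<dots> \<longleftrightarrow> 1 / of_nat t \<le> v \<and> v < 1 / (of_nat t - 1)"
    using assms by (auto simp: field_simps)
  finally show ?thesis .
qed

lemma item_class_times_ge:
  assumes "0 < v"
  shows "1 \<le> of_nat (item_class v) * v"
proof -
  have "1 / v \<le> of_int \<lceil>1 / v\<rceil>" by (rule le_of_int_ceiling)
  also have "\<dots> = of_nat (item_class v)"
    unfolding item_class_def using assms by simp
  finally show ?thesis using assms by (simp add: field_simps)
qed

lemma item_class_mem_iff:
  assumes "0 < v" "v < 1"
  shows "item_class v \<in> {2, 3, 4} \<longleftrightarrow> 1/4 \<le> v"
  using item_class_eq_iff[OF assms(1), of 2] item_class_eq_iff[OF assms(1), of 3]
    item_class_eq_iff[OF assms(1), of 4] assms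
  by auto

definition n_class :: "rat list \<Rightarrow> nat \<Rightarrow> nat" where
  "n_class xs t = length (filter (\<lambda>v. item_class v = t) xs)"

definition dnf_count_inv :: "nat \<Rightarrow> rat \<times> nat \<Rightarrow> int \<Rightarrow> bool" where
  "dnf_count_inv t s N \<longleftrightarrow>
     0 \<le> fst s \<and> fst s < 1 \<and> of_int N \<le> of_nat t * (of_nat (snd s) + fst s)"

lemma dnf_count_inv_less:
  assumes "dnf_count_inv t s N" "0 < t"
  shows "N < int t * (int (snd s) + 1)"
proof -
  have "of_nat t * fst s < of_nat t * (1::rat)"
    using assms by (intro mult_strict_left_mono) (auto simp: dnf_count_inv_def)
  then have "of_int N < of_int (int t * (int (snd s) + 1) :: int) * (1::rat)"
    using assms(1) unfolding dnf_count_inv_def by (simp add: algebra_simps)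
  then show ?thesis
    by (simp only: mult_1_right of_int_less_iff)
qed

lemma dnf_count_inv_add:
  assumes inv: "dnf_count_inv t s N" and v: "1 \<le> of_nat t * v" "0 \<le> v"
  shows "dnf_count_inv t (dnf_add v s) (N + 1)"
proof (cases "1 \<le> fst s + v")
  case True
  have "0 < t" using v by (auto intro: ccontr)
  then have "N + 1 \<le> int t * (int (snd s) + 1)"
    using dnf_count_inv_less[OF inv] by simp
  then have "of_int (N + 1) \<le> (of_int (int t * (int (snd s) + 1)) :: rat)"
    by (simp only: of_int_le_iff)
  then show ?thesis
    using True unfolding dnf_count_inv_def dnf_add_def by (simp add: add.commute)
next
  case False
  then show ?thesis
    using assms unfolding dnf_count_inv_def dnf_add_def by (simp add: algebra_simps)
qed

lemma dnf_count_inv_bound: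
  assumes "dnf_count_inv t s N" "0 < t"
  shows "(of_int N :: rat) \<le> of_nat t * of_nat (snd s) + of_nat t - 1"
proof -
  have "N \<le> int t * int (snd s) + int t - 1"
    using dnf_count_inv_less[OF assms] by (simp add: algebra_simps)
  then have "(of_int N :: rat) \<le> of_int (int t * int (snd s) + int t - 1)"
    by (simp only: of_int_le_iff)
  then show ?thesis by simp
qed

definition dnf_total_inv :: "rat \<Rightarrow> rat \<times> nat \<Rightarrow> rat \<Rightarrow> bool" where
  "dnf_total_inv \<delta> s A \<longleftrightarrow> 0 \<le> fst s \<and> fst s < 1 \<and> A \<le> (1 + \<delta>) * of_nat (snd s) + fst s"

lemma dnf_total_inv_add:
  "dnf_total_inv \<delta> s A \<Longrightarrow> 0 \<le> v \<Longrightarrow> v \<le> \<delta> \<Longrightarrow> dnf_total_inv \<delta> (dnf_add v s) (A + v)"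
  unfolding dnf_total_inv_def dnf_add_def by (auto simp: algebra_simps)

section \<open>Critical bins\<close>

type_synonym crit_bin = "rat option \<times> rat"

definition prefix_count :: "(rat \<Rightarrow> bool) \<Rightarrow> rat list \<Rightarrow> nat \<Rightarrow> nat" where
  "prefix_count P xs p = length (filter P (take p xs))"

lemma prefix_count_Suc:
  "p < length xs \<Longrightarrow>
    prefix_count P xs (Suc p) = prefix_count P xs p + (if P (xs ! p) then 1 else 0)"
  unfolding prefix_count_def by (simp add: take_Suc_conv_app_nth)

definition smalls :: "rat list \<Rightarrow> nat \<Rightarrow> nat set" where
  "smalls xs p = {i. i < p \<and> xs ! i < 1/4}"

definition small_sum :: "rat list \<Rightarrow> nat \<Rightarrow> rat" where
  "small_sum xs p = (\<Sum>i\<in>smalls xs p. xs ! i)"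

lemma finite_smalls [simp]: "finite (smalls xs p)"
  unfolding smalls_def by simp

lemma not_mem_smalls [simp]: "p \<notin> smalls xs p"
  unfolding smalls_def by simp

lemma smalls_Suc:
  "smalls xs (Suc p) = (if xs ! p < 1/4 then insert p (smalls xs p) else smalls xs p)"
  unfolding smalls_def by (auto simp: less_Suc_eq)

lemma small_sum_Suc:
  "small_sum xs (Suc p) = small_sum xs p + (if xs ! p < 1/4 then xs ! p else 0)"
  unfolding small_sum_def smalls_Suc by (simp add: smalls_def)

lemma smalls_nonneg:
  "\<forall>v\<in>set xs. 0 < v \<and> v < 1 \<Longrightarrow> j \<in> smalls xs (length xs) \<Longrightarrow> 0 \<le> xs ! j"
  unfolding smalls_def by (auto intro: less_imp_le)

definition filled :: "crit_bin list \<Rightarrow> nat" where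
  "filled cr = length (filter (\<lambda>b. fst b \<noteq> None) cr)"

definition crit_covered :: "rat \<Rightarrow> crit_bin list \<Rightarrow> nat" where
  "crit_covered x cr = length (filter (\<lambda>b. 1 \<le> vload x b) cr)"

definition crit_small_load :: "crit_bin list \<Rightarrow> rat" where
  "crit_small_load cr = (\<Sum>b\<leftarrow>cr. snd b)"

definition crit_bin_ok :: "rat \<Rightarrow> crit_bin \<Rightarrow> bool" where
  "crit_bin_ok x b \<longleftrightarrow> (\<forall>a. fst b = Some a \<longrightarrow> x \<le> a) \<and> 0 \<le> snd b \<and> snd b < 5/4 - x"

definition smalls_after_covered :: "rat \<Rightarrow> crit_bin list \<Rightarrow> bool" where
  "smalls_after_covered x cr \<longleftrightarrow>
     (\<forall>k<length cr. 0 < snd (cr ! k) \<longrightarrow> (\<forall>l<k. 1 \<le> vload x (cr ! l)))"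

(*
  CL collects the small items that covered a critical bin. Small items are only added to
  a critical bin while its virtual load is below 1, so the other small items of a covered
  bin weigh less than 1 - x; and as long as some critical bin is open, no small item
  goes to the small bin.
*)
definition small_cap :: "rat \<Rightarrow> crit_bin \<Rightarrow> rat" where
  "small_cap x b = (if 1 \<le> vload x b then 1 - x else snd b)"

definition completing_smalls :: "rat list \<Rightarrow> rat \<Rightarrow> nat \<Rightarrow> crit_bin list \<Rightarrow> nat set \<Rightarrow> bool" where
  "completing_smalls xs x p cr CL \<longleftrightarrow> CL \<subseteq> smalls xs p \<and> card CL \<le> crit_covered x cr \<and>
     ((\<exists>b\<in>set cr. vload x b < 1) \<longrightarrow> (\<Sum>i\<in>smalls xs p - CL. xs ! i) \<le> (\<Sum>b\<leftarrow>cr. small_cap x b))"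

definition crit_inv :: "rat list \<Rightarrow> rat \<Rightarrow> nat \<Rightarrow> nat \<Rightarrow> crit_bin list \<Rightarrow> bool" where
  "crit_inv xs x m p cr \<longleftrightarrow> length cr = m \<and> filled cr = min m (prefix_count ((\<le>) x) xs p) \<and>
     (\<forall>b\<in>set cr. crit_bin_ok x b) \<and> smalls_after_covered x cr \<and>
     (\<exists>CL. completing_smalls xs x p cr CL)"

lemma vload_ge: "crit_bin_ok x b \<Longrightarrow> snd b + x \<le> vload x b"
  unfolding crit_bin_ok_def vload_def by (cases "fst b") auto

lemma small_load_open: "crit_bin_ok x b \<Longrightarrow> vload x b < 1 \<Longrightarrow> snd b < 1 - x"
  using vload_ge[of x b] by simp

lemma smalls_after_covered_update:
  assumes "smalls_after_covered x cr" "k < length cr" "vload x (cr ! k) \<le> vload x b'"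
    and "0 < snd b' \<Longrightarrow> 0 < snd (cr ! k) \<or> (\<forall>l<k. 1 \<le> vload x (cr ! l))"
  shows "smalls_after_covered x (cr[k := b'])"
  unfolding smalls_after_covered_def
proof (intro allI impI)
  fix j l
  assume j: "j < length (cr[k := b'])" "0 < snd (cr[k := b'] ! j)" and "l < j"
  have "1 \<le> vload x (cr ! l)"
    using assms j \<open>l < j\<close> unfolding smalls_after_covered_def by (cases "j = k") auto
  also have "\<dots> \<le> vload x (cr[k := b'] ! l)"
    using assms(2,3) by (cases "l = k") auto
  finally show "1 \<le> vload x (cr[k := b'] ! l)" .
qed

lemma open_bin_update:
  assumes "\<exists>b\<in>set (cr[k := b']). vload x b < 1" "vload x (cr ! k) \<le> vload x b'" "k < length cr"
  shows "\<exists>b\<in>set cr. vload x b < 1"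
proof -
  obtain c where c: "c \<in> set (cr[k := b'])" "vload x c < 1"
    using assms(1) by blast
  then have "c = b' \<or> c \<in> set cr"
    using set_update_subset_insert by fastforce
  then show ?thesis
    using c assms(2,3) by (metis nth_mem order.strict_trans1)
qed

(* Only the first open critical bin can hold small items. *)
lemma sum_small_cap_less:
  assumes "smalls_after_covered x cr" "\<forall>b\<in>set cr. crit_bin_ok x b" "\<exists>b\<in>set cr. vload x b < 1"
  shows "(\<Sum>b\<leftarrow>cr. small_cap x b) < of_nat (crit_covered x cr + 1) * (1 - x)"
  using assms
proof (induction cr)
  case Nil
  then show ?case by simp
next
  case (Cons a cr)
  have tail: "smalls_after_covered x cr"
    using Cons.prems(1) unfolding smalls_after_covered_def by force
  show ?case
  proof (cases "1 \<le> vload x a")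
    case True
    then have "\<exists>b\<in>set cr. vload x b < 1" using Cons.prems(3) by auto
    with Cons.IH[OF tail] Cons.prems(2) True show ?thesis
      by (simp add: small_cap_def crit_covered_def algebra_simps)
  next
    case False
    have "\<forall>b\<in>set cr. snd b = 0"
    proof
      fix b assume "b \<in> set cr"
      then obtain k where "k < length cr" "b = cr ! k" by (auto simp: in_set_conv_nth)
      then have "\<not> 0 < snd b"
        using Cons.prems(1) False unfolding smalls_after_covered_def by fastforce
      then show "snd b = 0" using Cons.prems(2) \<open>b \<in> set cr\<close> by (auto simp: crit_bin_ok_def)
    qed
    then have "(\<Sum>b\<leftarrow>cr. small_cap x b) \<le> of_nat (crit_covered x cr) * (1 - x)"
      unfolding crit_covered_def small_cap_def
      by (induction cr) (auto simp: algebra_simps)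
    moreover have "snd a < 1 - x" using Cons.prems(2) False small_load_open by auto
    ultimately show ?thesis
      using False by (simp add: small_cap_def crit_covered_def algebra_simps)
  qed
qed

lemma completing_smalls_update_mono:
  assumes CL: "completing_smalls xs x p cr CL" and k: "k < length cr"
    and mono: "vload x (cr ! k) \<le> vload x b'" "small_cap x (cr ! k) \<le> small_cap x b'"
    and smalls: "smalls xs p' = smalls xs p"
  shows "completing_smalls xs x p' (cr[k := b']) CL"
proof -
  have "crit_covered x cr \<le> crit_covered x (cr[k := b'])"
    using length_filter_update[OF k, of "\<lambda>b. 1 \<le> vload x b" b'] mono(1)
    unfolding crit_covered_def by (simp split: if_splits)
  moreover have "(\<Sum>c\<leftarrow>cr. small_cap x c) \<le> (\<Sum>c\<leftarrow>cr[k := b']. small_cap x c)"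
    using sum_list_map_update[OF k, of "small_cap x" b'] mono(2) by simp
  moreover have "(\<exists>c\<in>set (cr[k := b']). vload x c < 1) \<Longrightarrow> \<exists>c\<in>set cr. vload x c < 1"
    using open_bin_update[of cr k b' x] mono(1) k by blast
  ultimately show ?thesis
    using CL smalls unfolding completing_smalls_def by (smt (verit) order_trans)
qed

lemma completing_smalls_place_small:
  assumes CL: "completing_smalls xs x p cr CL" and k: "k < length cr" "vload x (cr ! k) < 1"
    and ok: "crit_bin_ok x (cr ! k)" and v: "xs ! p = v" "v < 1/4"
  shows "\<exists>CL'. completing_smalls xs x (Suc p) (cr[k := (fst (cr ! k), snd (cr ! k) + v)]) CL'"
proof -
  define b' where "b' = (fst (cr ! k), snd (cr ! k) + v)"
  have room: "snd (cr ! k) < 1 - x" using small_load_open[OF ok k(2)] .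
  have smalls': "smalls xs (Suc p) = insert p (smalls xs p)" using v by (simp add: smalls_Suc)
  have cov: "crit_covered x (cr[k := b']) = crit_covered x cr + (if 1 \<le> vload x b' then 1 else 0)"
    using length_filter_update[OF k(1), of "\<lambda>b. 1 \<le> vload x b" b'] k(2)
    unfolding crit_covered_def by simp
  have "small_cap x (cr ! k) = snd (cr ! k)" using k(2) unfolding small_cap_def by simp
  then have caps: "(\<Sum>c\<leftarrow>cr[k := b']. small_cap x c)
      = (\<Sum>c\<leftarrow>cr. small_cap x c) - snd (cr ! k) + small_cap x b'"
    using sum_list_map_update[OF k(1), of "small_cap x" b'] by simp
  have sub: "CL \<subseteq> smalls xs p" and cov_CL: "card CL \<le> crit_covered x cr"
    and bound: "(\<Sum>i\<in>smalls xs p - CL. xs ! i) \<le> (\<Sum>c\<leftarrow>cr. small_cap x c)"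
    using CL k unfolding completing_smalls_def by (blast intro: nth_mem)+
  have p_CL: "p \<notin> CL" using sub by auto
  have fin: "finite CL" using sub by (rule finite_subset) simp
  show ?thesis
  proof (cases "1 \<le> vload x b'")
    case True
    have "smalls xs (Suc p) - insert p CL = smalls xs p - CL"
      using smalls' by auto
    moreover have "card (insert p CL) = Suc (card CL)" using fin p_CL by simp
    moreover have "(\<Sum>c\<leftarrow>cr. small_cap x c) \<le> (\<Sum>c\<leftarrow>cr[k := b']. small_cap x c)"
      using caps room True unfolding small_cap_def by simp
    ultimately have "completing_smalls xs x (Suc p) (cr[k := b']) (insert p CL)"
      using sub bound cov_CL cov True smalls' unfolding completing_smalls_def by auto
    then show ?thesis unfolding b'_def ..
  next
    case False
    have "smalls xs (Suc p) - CL = insert p (smalls xs p - CL)" using smalls' p_CL by auto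
    then have "(\<Sum>i\<in>smalls xs (Suc p) - CL. xs ! i) = v + (\<Sum>i\<in>smalls xs p - CL. xs ! i)"
      using v by simp
    moreover have "(\<Sum>c\<leftarrow>cr[k := b']. small_cap x c) = (\<Sum>c\<leftarrow>cr. small_cap x c) + v"
      using caps False unfolding small_cap_def b'_def by simp
    ultimately have "completing_smalls xs x (Suc p) (cr[k := b']) CL"
      using sub bound cov_CL cov False smalls' unfolding completing_smalls_def by auto
    then show ?thesis unfolding b'_def ..
  qed
qed

lemma crit_inv_place_big:
  assumes inv: "crit_inv xs x m p cr" and p: "p < length xs"
    and v: "xs ! p = v" "x \<le> v" "\<not> v < 1/4" and none: "\<exists>b\<in>set cr. fst b = None"
  defines "cr' \<equiv> upd_first (\<lambda>b. fst b = None) (\<lambda>b. (Some v, snd b)) cr"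
  shows "crit_inv xs x m (Suc p) cr'" "filled cr' = Suc (filled cr)"
    "crit_small_load cr' = crit_small_load cr"
proof -
  obtain k where k: "k < length cr" "fst (cr ! k) = None"
    and upd: "cr' = cr[k := (Some v, snd (cr ! k))]"
  proof (rule upd_first_eq_update[OF none])
    fix k assume "k < length cr" "fst (cr ! k) = None"
      "upd_first (\<lambda>b. fst b = None) (\<lambda>b. (Some v, snd b)) cr = cr[k := (Some v, snd (cr ! k))]"
    then show thesis using that unfolding cr'_def by blast
  qed
  define b where "b = cr ! k"
  define b' where "b' = (Some v, snd b)"
  have cr': "cr' = cr[k := b']" unfolding upd b_def b'_def ..
  have ok: "crit_bin_ok x b" using inv k unfolding crit_inv_def b_def by simp
  have ok': "crit_bin_ok x b'" using ok v unfolding crit_bin_ok_def b'_def by simp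
  have mono: "vload x b \<le> vload x b'" using k v unfolding b_def b'_def vload_def by simp
  have cap: "small_cap x b \<le> small_cap x b'"
    using mono small_load_open[OF ok] unfolding small_cap_def b'_def by auto
  show filled': "filled cr' = Suc (filled cr)"
    using length_filter_update[OF k(1), of "\<lambda>b. fst b \<noteq> None" b'] k
    unfolding filled_def cr' b_def b'_def by simp
  show "crit_small_load cr' = crit_small_load cr"
    using sum_list_map_update[OF k(1), of snd b'] unfolding crit_small_load_def cr' b_def b'_def
    by simp
  have "filled cr < length cr"
    unfolding filled_def using k by (intro length_filter_less[of "cr ! k"]) auto
  moreover have "prefix_count ((\<le>) x) xs (Suc p) = Suc (prefix_count ((\<le>) x) xs p)"
    using prefix_count_Suc[OF p] v by simp
  ultimately have count: "filled cr' = min m (prefix_count ((\<le>) x) xs (Suc p))"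
    using inv filled' unfolding crit_inv_def by simp
  from inv obtain CL where "completing_smalls xs x p cr CL"
    unfolding crit_inv_def by blast
  then have "completing_smalls xs x (Suc p) cr' CL"
    unfolding cr' b_def using k mono cap v
    by (intro completing_smalls_update_mono) (auto simp: smalls_Suc b_def)
  moreover have "\<forall>c\<in>set cr'. crit_bin_ok x c"
    using inv ok' set_update_subset_insert[of cr k b'] unfolding cr' crit_inv_def by blast
  moreover have "smalls_after_covered x cr'"
    using inv k mono unfolding cr' crit_inv_def
    by (intro smalls_after_covered_update) (auto simp: b_def b'_def)
  ultimately show "crit_inv xs x m (Suc p) cr'"
    using inv count unfolding crit_inv_def cr' by auto
qed

lemma crit_inv_place_small:
  assumes inv: "crit_inv xs x m p cr" and p: "p < length xs"
    and v: "xs ! p = v" "0 < v" "v < 1/4" "v < x" and opn: "\<exists>b\<in>set cr. vload x b < 1"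
  defines "cr' \<equiv> upd_first (\<lambda>b. vload x b < 1) (\<lambda>b. (fst b, snd b + v)) cr"
  shows "crit_inv xs x m (Suc p) cr'" "filled cr' = filled cr"
    "crit_small_load cr' = crit_small_load cr + v"
proof -
  obtain k where k: "k < length cr" "vload x (cr ! k) < 1" "\<forall>l<k. 1 \<le> vload x (cr ! l)"
    and upd: "cr' = cr[k := (fst (cr ! k), snd (cr ! k) + v)]"
  proof (rule upd_first_eq_update[OF opn])
    fix k assume "k < length cr" "vload x (cr ! k) < 1" "\<forall>l<k. \<not> vload x (cr ! l) < 1"
      "upd_first (\<lambda>b. vload x b < 1) (\<lambda>b. (fst b, snd b + v)) cr
         = cr[k := (fst (cr ! k), snd (cr ! k) + v)]"
    then show thesis using that unfolding cr'_def by (simp add: not_less)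
  qed
  define b where "b = cr ! k"
  define b' where "b' = (fst b, snd b + v)"
  have cr': "cr' = cr[k := b']" unfolding upd b_def b'_def ..
  have ok: "crit_bin_ok x b" using inv k unfolding crit_inv_def b_def by simp
  have room: "snd b < 1 - x" using small_load_open[OF ok] k unfolding b_def by simp
  have ok': "crit_bin_ok x b'" using ok v room unfolding crit_bin_ok_def b'_def by simp
  show filled': "filled cr' = filled cr"
    using length_filter_update[OF k(1), of "\<lambda>b. fst b \<noteq> None" b']
    unfolding filled_def cr' b_def b'_def by simp
  show "crit_small_load cr' = crit_small_load cr + v"
    using sum_list_map_update[OF k(1), of snd b'] unfolding crit_small_load_def cr' b_def b'_def
    by simp
  have count: "prefix_count ((\<le>) x) xs (Suc p) = prefix_count ((\<le>) x) xs p"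
    using prefix_count_Suc[OF p] v by simp
  from inv obtain CL where "completing_smalls xs x p cr CL"
    unfolding crit_inv_def by blast
  then have "\<exists>CL'. completing_smalls xs x (Suc p) cr' CL'"
    unfolding upd using k ok v unfolding b_def by (intro completing_smalls_place_small) auto
  moreover have "\<forall>c\<in>set cr'. crit_bin_ok x c"
    using inv ok' set_update_subset_insert[of cr k b'] unfolding cr' crit_inv_def by blast
  moreover have "smalls_after_covered x cr'"
    using inv k v unfolding cr' crit_inv_def
    by (intro smalls_after_covered_update) (auto simp: b_def b'_def vload_def)
  ultimately show "crit_inv xs x m (Suc p) cr'"
    using inv count filled' unfolding crit_inv_def cr' by auto
qed

lemma crit_inv_skip:
  assumes inv: "crit_inv xs x m p cr" and p: "p < length xs"
    and big: "x \<le> xs ! p \<Longrightarrow> \<forall>b\<in>set cr. fst b \<noteq> None"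
    and small: "xs ! p < 1/4 \<Longrightarrow> \<forall>b\<in>set cr. 1 \<le> vload x b"
  shows "crit_inv xs x m (Suc p) cr"
proof -
  have "filled cr = min m (prefix_count ((\<le>) x) xs (Suc p))"
  proof (cases "x \<le> xs ! p")
    case True
    then have "filled cr = m"
      using big inv unfolding filled_def crit_inv_def by (simp add: filter_id_conv)
    then show ?thesis
      using inv prefix_count_Suc[OF p] unfolding crit_inv_def by auto
  next
    case False
    then show ?thesis
      using inv prefix_count_Suc[OF p] unfolding crit_inv_def by auto
  qed
  moreover obtain CL where "completing_smalls xs x p cr CL"
    using inv unfolding crit_inv_def by blast
  then have "completing_smalls xs x (Suc p) cr CL"
    using small unfolding completing_smalls_def smalls_Suc
    by (cases "xs ! p < 1/4") (auto simp: not_less)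
  ultimately show ?thesis
    using inv unfolding crit_inv_def by blast
qed

section \<open>Runs of the strategy\<close>

(* The big items of the filled critical bins are 2-items that bypass the 2-bins. *)
definition dh_inv :: "rat list \<Rightarrow> rat \<Rightarrow> nat \<Rightarrow> nat \<Rightarrow> dh_state \<Rightarrow> bool" where
  "dh_inv xs x m p st \<longleftrightarrow> (case st of (cr, tb, sb) \<Rightarrow>
     crit_inv xs x m p cr \<and>
     (\<forall>t\<in>{2, 3, 4}. dnf_count_inv t (tb t)
        (int (prefix_count (\<lambda>v. item_class v = t) xs p) - (if t = 2 then int (filled cr) else 0))) \<and>
     dnf_total_inv (1/4) sb (small_sum xs p - crit_small_load cr) \<and>
     crit_small_load cr \<le> small_sum xs p)"

lemma dh_inv_place_big:
  assumes inv: "dh_inv xs x m p (cr, tb, sb)" and p: "p < length xs"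
    and v: "xs ! p = v" "v < 1" "x \<le> v" and x: "1/2 \<le> x" and none: "\<exists>b\<in>set cr. fst b = None"
  shows "dh_inv xs x m (Suc p) (upd_first (\<lambda>b. fst b = None) (\<lambda>b. (Some v, snd b)) cr, tb, sb)"
proof -
  have two: "item_class v = 2" using item_class_eq_iff[of v 2] v x by simp
  have big: "\<not> v < 1/4" using v x by simp
  show ?thesis
    using inv crit_inv_place_big[OF _ p v(1) v(3) big none] two big
    unfolding dh_inv_def prefix_count_Suc[OF p] small_sum_Suc v(1) by auto
qed

lemma dh_inv_place_class:
  assumes inv: "dh_inv xs x m p (cr, tb, sb)" and p: "p < length xs"
    and v: "xs ! p = v" "0 < v" "v < 1" "1/4 \<le> v" and skip: "\<not> (x \<le> v \<and> (\<exists>b\<in>set cr. fst b = None))"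
  defines "t \<equiv> item_class v"
  shows "dh_inv xs x m (Suc p) (cr, tb(t := dnf_add v (tb t)), sb)"
proof -
  have t: "t \<in> {2, 3, 4}" "1 \<le> of_nat t * v"
    using item_class_mem_iff[OF v(2,3)] v item_class_times_ge[OF v(2)] unfolding t_def by auto
  have "crit_inv xs x m (Suc p) cr"
    using inv p skip v(1,4) unfolding dh_inv_def by (intro crit_inv_skip) auto
  moreover have "\<forall>t'\<in>{2, 3, 4}. dnf_count_inv t' ((tb(t := dnf_add v (tb t))) t')
      (int (prefix_count (\<lambda>v. item_class v = t') xs (Suc p)) - (if t' = 2 then int (filled cr) else 0))"
  proof
    fix t' :: nat assume t': "t' \<in> {2, 3, 4}"
    let ?N = "\<lambda>q. int (prefix_count (\<lambda>v. item_class v = t') xs q)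
      - (if t' = 2 then int (filled cr) else 0)"
    have old: "dnf_count_inv t' (tb t') (?N p)"
      using inv t' unfolding dh_inv_def by auto
    have count: "?N (Suc p) = ?N p + (if t = t' then 1 else 0)"
      using prefix_count_Suc[OF p] v(1) unfolding t_def by simp
    show "dnf_count_inv t' ((tb(t := dnf_add v (tb t))) t') (?N (Suc p))"
    proof (cases "t = t'")
      case True
      have "dnf_count_inv t' (dnf_add v (tb t')) (?N p + 1)"
        using True t v(2) by (intro dnf_count_inv_add[OF old]) auto
      moreover have "?N (Suc p) = ?N p + 1" using count True by simp
      moreover have "(tb(t := dnf_add v (tb t))) t' = dnf_add v (tb t')" using True by simp
      ultimately show ?thesis by (simp only:)
    next
      case False
      then have "?N (Suc p) = ?N p" "(tb(t := dnf_add v (tb t))) t' = tb t'"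
        using count by simp_all
      then show ?thesis using old by (simp only:)
    qed
  qed
  ultimately show ?thesis
    using inv v unfolding dh_inv_def small_sum_Suc by simp
qed

lemma dh_inv_place_small_crit:
  assumes inv: "dh_inv xs x m p (cr, tb, sb)" and p: "p < length xs"
    and v: "xs ! p = v" "0 < v" "v < 1/4" and x: "1/2 \<le> x" and opn: "\<exists>b\<in>set cr. vload x b < 1"
  shows "dh_inv xs x m (Suc p) (upd_first (\<lambda>b. vload x b < 1) (\<lambda>b. (fst b, snd b + v)) cr, tb, sb)"
proof -
  have "v < x" using v x by simp
  note crit = crit_inv_place_small[OF _ p v this opn]
  have "item_class v \<notin> {2, 3, 4}" using item_class_mem_iff[of v] v by simp
  then show ?thesis
    using inv crit v unfolding dh_inv_def prefix_count_Suc[OF p] small_sum_Suc by auto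
qed

lemma dh_inv_place_small_bin:
  assumes inv: "dh_inv xs x m p (cr, tb, sb)" and p: "p < length xs"
    and v: "xs ! p = v" "0 < v" "v < 1/4" and x: "1/2 \<le> x" and full: "\<forall>b\<in>set cr. 1 \<le> vload x b"
  shows "dh_inv xs x m (Suc p) (cr, tb, dnf_add v sb)"
proof -
  have "item_class v \<notin> {2, 3, 4}" using item_class_mem_iff[of v] v by simp
  moreover have "crit_inv xs x m (Suc p) cr"
    using inv p full v x unfolding dh_inv_def by (intro crit_inv_skip) auto
  moreover have "dnf_total_inv (1/4) (dnf_add v sb) (small_sum xs p - crit_small_load cr + v)"
    using inv v unfolding dh_inv_def by (intro dnf_total_inv_add) auto
  ultimately show ?thesis
    using inv v unfolding dh_inv_def prefix_count_Suc[OF p] small_sum_Suc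
    by (simp add: algebra_simps)
qed

lemma dh_inv_step:
  assumes inv: "dh_inv xs x m p (cr, tb, sb)" and p: "p < length xs"
    and v: "xs ! p = v" "0 < v" "v < 1" and x: "1/2 \<le> x"
  shows "dh_inv xs x m (Suc p) (dh_step 4 x v (cr, tb, sb))"
proof (cases "x \<le> v \<and> (\<exists>b\<in>set cr. fst b = None)")
  case True
  then show ?thesis
    using dh_inv_place_big[OF inv p v(1,3) _ x] unfolding dh_step_def by auto
next
  case skip: False
  show ?thesis
  proof (cases "1/4 \<le> v")
    case True
    then show ?thesis
      using dh_inv_place_class[OF inv p v True skip] unfolding dh_step_def
      by (simp add: if_not_P[OF skip])
  next
    case small: False
    then show ?thesis
      using dh_inv_place_small_crit[OF inv p v(1,2) _ x] dh_inv_place_small_bin[OF inv p v(1,2) _ x] x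
      unfolding dh_step_def by (auto simp: not_le not_less)
  qed
qed

lemma dh_inv_init:
  assumes "x \<le> 1"
  shows "dh_inv xs x m 0 (replicate m (None, 0), (\<lambda>_. (0, 0)), (0, 0))"
proof -
  have caps: "0 \<le> (\<Sum>b\<leftarrow>replicate m (None, 0). small_cap x b)"
    using assms by (intro sum_list_nonneg) (auto simp: small_cap_def)
  have "completing_smalls xs x 0 (replicate m (None, 0)) {}"
    using caps unfolding completing_smalls_def smalls_def by simp
  then have "crit_inv xs x m 0 (replicate m (None, 0))"
    using assms unfolding crit_inv_def filled_def prefix_count_def crit_bin_ok_def
      smalls_after_covered_def by auto
  then show ?thesis
    unfolding dh_inv_def dnf_count_inv_def dnf_total_inv_def crit_small_load_def small_sum_def
      prefix_count_def filled_def smalls_def by (simp add: sum_list_replicate)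
qed

lemma dh_inv_fold:
  assumes items: "\<forall>v\<in>set xs. 0 < v \<and> v < 1" and x: "1/2 \<le> x" "x \<le> 1"
    and p: "p \<le> length xs"
  shows "dh_inv xs x m p (fold (dh_step 4 x) (take p xs) (replicate m (None, 0), (\<lambda>_. (0, 0)), (0, 0)))"
  using p
proof (induction p)
  case 0
  then show ?case using dh_inv_init[OF x(2)] by simp
next
  case (Suc p)
  obtain cr tb sb where st: "fold (dh_step 4 x) (take p xs) (replicate m (None, 0), (\<lambda>_. (0, 0)), (0, 0))
      = (cr, tb, sb)"
    by (metis prod_cases3)
  have "p < length xs" using Suc.prems by simp
  then have "xs ! p \<in> set xs" by simp
  then have "dh_inv xs x m (Suc p) (dh_step 4 x (xs ! p) (cr, tb, sb))"
    using Suc \<open>p < length xs\<close> items x st by (intro dh_inv_step) auto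
  then show ?case
    using st \<open>p < length xs\<close> by (simp add: take_Suc_conv_app_nth)
qed

definition dh_final :: "rat list \<Rightarrow> nat \<Rightarrow> dh_state" where
  "dh_final xs m = fold (dh_step 4 (xm_of xs m)) xs (replicate m (None, 0), (\<lambda>_. (0, 0)), (0, 0))"

definition crit_full :: "rat list \<Rightarrow> nat \<Rightarrow> bool" where
  "crit_full xs m \<longleftrightarrow> (\<forall>b\<in>set (fst (dh_final xs m)). 1 \<le> aload b)"

lemma dh_final_inv:
  assumes items: "\<forall>v\<in>set xs. 0 < v \<and> v < 1" and m: "m \<le> n_two_items xs"
  obtains cr tb sb where "dh_final xs m = (cr, tb, sb)"
    "dh_inv xs (xm_of xs m) m (length xs) (cr, tb, sb)" "\<forall>b\<in>set cr. aload b = vload (xm_of xs m) b"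
proof -
  obtain cr tb sb where st: "dh_final xs m = (cr, tb, sb)" by (metis prod_cases3)
  note x = xm_of_bounds[OF items m]
  have inv: "dh_inv xs (xm_of xs m) m (length xs) (cr, tb, sb)"
    using dh_inv_fold[OF items x(1,2) order_refl, of m] st unfolding dh_final_def by simp
  then have "filled cr = length cr"
    using x(3) unfolding dh_inv_def crit_inv_def prefix_count_def by simp
  have "\<forall>b\<in>set cr. aload b = vload (xm_of xs m) b"
  proof
    fix b assume b: "b \<in> set cr"
    have "fst b \<noteq> None"
    proof
      assume "fst b = None"
      then have "filled cr < length cr"
        unfolding filled_def using b by (intro length_filter_less) auto
      with \<open>filled cr = length cr\<close> show False by simp
    qed
    then show "aload b = vload (xm_of xs m) b"
      unfolding aload_def vload_def by auto
  qed
  with st inv show thesis by (rule that)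
qed

lemma crit_full_0:
  assumes "\<forall>v\<in>set xs. 0 < v \<and> v < 1"
  shows "crit_full xs 0"
proof -
  obtain cr tb sb where "dh_final xs 0 = (cr, tb, sb)"
    and "dh_inv xs (xm_of xs 0) 0 (length xs) (cr, tb, sb)"
    and "\<forall>b\<in>set cr. aload b = vload (xm_of xs 0) b"
    by (rule dh_final_inv[OF assms le0])
  then show ?thesis
    unfolding crit_full_def dh_inv_def crit_inv_def by simp
qed

lemma dh_run_ge:
  assumes items: "\<forall>v\<in>set xs. 0 < v \<and> v < 1" and m: "m \<le> n_two_items xs"
    and full: "crit_full xs m"
  shows "of_nat m / 2 + of_nat (n_class xs 2) / 2 + of_nat (n_class xs 3) / 3
      + of_nat (n_class xs 4) / 4
      + 4/5 * max 0 (small_sum xs (length xs) - of_nat m * (5/4 - xm_of xs m)) - 163/60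
    \<le> (of_nat (dh_run 4 xs m) :: rat)"
proof -
  obtain cr tb sb where st: "dh_final xs m = (cr, tb, sb)"
    and inv: "dh_inv xs (xm_of xs m) m (length xs) (cr, tb, sb)"
    and al: "\<forall>b\<in>set cr. aload b = vload (xm_of xs m) b"
    by (rule dh_final_inv[OF items m])
  have count: "\<And>t. prefix_count (\<lambda>v. item_class v = t) xs (length xs) = n_class xs t"
    unfolding prefix_count_def n_class_def by simp
  have crit: "crit_inv xs (xm_of xs m) m (length xs) cr"
    and tbins: "\<forall>t\<in>{2, 3, 4}. dnf_count_inv t (tb t) (int (n_class xs t) - (if t = 2 then int (filled cr) else 0))"
    and sbin: "dnf_total_inv (1/4) sb (small_sum xs (length xs) - crit_small_load cr)"
    and crit_le: "crit_small_load cr \<le> small_sum xs (length xs)"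
    using inv unfolding dh_inv_def count by simp_all
  have len: "length cr = m" and filled: "filled cr = m"
    using crit xm_of_bounds(3)[OF items m] unfolding crit_inv_def prefix_count_def by simp_all
  have "length (filter (\<lambda>b. 1 \<le> aload b) cr) = m"
    using full st len unfolding crit_full_def by (simp add: filter_id_conv)
  then have run: "dh_run 4 xs m = m + snd (tb 2) + snd (tb 3) + snd (tb 4) + snd sb"
    using st unfolding dh_run_def dh_final_def[symmetric] by (simp add: numeral_eq_Suc)
  have "of_nat (n_class xs 2) - of_nat m \<le> 2 * of_nat (snd (tb 2)) + (1::rat)"
    using dnf_count_inv_bound[of 2 "tb 2" "int (n_class xs 2) - int m"] tbins filled by simp
  moreover have "of_nat (n_class xs 3) \<le> 3 * of_nat (snd (tb 3)) + (2::rat)"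
    using dnf_count_inv_bound[of 3 "tb 3" "int (n_class xs 3)"] tbins by simp
  moreover have "of_nat (n_class xs 4) \<le> 4 * of_nat (snd (tb 4)) + (3::rat)"
    using dnf_count_inv_bound[of 4 "tb 4" "int (n_class xs 4)"] tbins by simp
  moreover have "small_sum xs (length xs) - crit_small_load cr \<le> 5/4 * of_nat (snd sb) + 1"
    using sbin unfolding dnf_total_inv_def by simp
  moreover have "crit_small_load cr \<le> of_nat m * (5/4 - xm_of xs m)"
  proof -
    have "crit_small_load cr \<le> (\<Sum>b\<leftarrow>cr. 5/4 - xm_of xs m)"
      unfolding crit_small_load_def using crit
      by (intro sum_list_mono) (auto simp: crit_inv_def crit_bin_ok_def)
    then show ?thesis using len by (simp add: sum_list_triv)
  qed
  ultimately show ?thesis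
    using crit_le unfolding run by (simp add: max_def field_simps)
qed

lemma dh_completing_smalls:
  assumes items: "\<forall>v\<in>set xs. 0 < v \<and> v < 1" and m: "m \<le> n_two_items xs"
    and not_full: "\<not> crit_full xs m"
  obtains CL where "CL \<subseteq> smalls xs (length xs)" "card CL < m"
    "(\<Sum>i\<in>smalls xs (length xs) - CL. xs ! i) < of_nat m * (1 - xm_of xs m)"
proof -
  define x where "x = xm_of xs m"
  obtain cr tb sb where st: "dh_final xs m = (cr, tb, sb)"
    and inv: "dh_inv xs x m (length xs) (cr, tb, sb)"
    and al: "\<forall>b\<in>set cr. aload b = vload x b"
    unfolding x_def by (rule dh_final_inv[OF items m])
  have crit: "crit_inv xs x m (length xs) cr"
    using inv unfolding dh_inv_def by simp
  have opn: "\<exists>b\<in>set cr. vload x b < 1"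
    using not_full st al unfolding crit_full_def by (auto simp: not_le)
  then have "crit_covered x cr < m"
    using crit unfolding crit_covered_def crit_inv_def
    by (metis length_filter_less not_le)
  moreover obtain CL where CL: "completing_smalls xs x (length xs) cr CL"
    using crit unfolding crit_inv_def by blast
  moreover have "(\<Sum>b\<leftarrow>cr. small_cap x b) < of_nat (crit_covered x cr + 1) * (1 - x)"
    using crit opn unfolding crit_inv_def by (intro sum_small_cap_less) auto
  moreover have "of_nat (crit_covered x cr + 1) * (1 - x) \<le> of_nat m * (1 - x)"
    using calculation(1) xm_of_bounds(2)[OF items m] unfolding x_def
    by (intro mult_right_mono) auto
  ultimately show thesis
    using opn unfolding completing_smalls_def x_def
    by (intro that[of CL]) auto
qed

section \<open>Weights and the optimum\<close>

definition bin_items :: "rat list \<Rightarrow> (nat \<Rightarrow> nat) \<Rightarrow> nat \<Rightarrow> nat set" where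
  "bin_items xs f b = {i. i < length xs \<and> f i = b}"

definition bin_small_load :: "rat list \<Rightarrow> (nat \<Rightarrow> nat) \<Rightarrow> nat \<Rightarrow> rat" where
  "bin_small_load xs f b = (\<Sum>i\<in>{i\<in>smalls xs (length xs). f i = b}. xs ! i)"

(* Tight bins, represented by their big item. *)
definition tight_items :: "rat list \<Rightarrow> (nat \<Rightarrow> nat) \<Rightarrow> nat set" where
  "tight_items xs f = {i. i < length xs \<and> 1/2 \<le> xs ! i \<and>
     (\<forall>j\<in>bin_items xs f (f i) - {i}. xs ! j < 1/4) \<and>
     1 \<le> (\<Sum>j\<in>bin_items xs f (f i). xs ! j) \<and> bin_small_load xs f (f i) < 1/4}"

definition loose_small_sum :: "rat list \<Rightarrow> (nat \<Rightarrow> nat) \<Rightarrow> rat" where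
  "loose_small_sum xs f =
     (\<Sum>i\<in>{i\<in>smalls xs (length xs). f i \<notin> f ` tight_items xs f}. xs ! i)"

definition weight_bound :: "rat list \<Rightarrow> (nat \<Rightarrow> nat) \<Rightarrow> rat" where
  "weight_bound xs f = 3/4 * of_nat (n_class xs 2) + 1/2 * of_nat (n_class xs 3)
    + 3/8 * of_nat (n_class xs 4) + of_nat (card (tight_items xs f)) / 4 + loose_small_sum xs f"

definition item_weight :: "rat \<Rightarrow> rat" where
  "item_weight v = (if 1/2 \<le> v then 3/4 else if 1/3 \<le> v then 1/2 else if 1/4 \<le> v then 3/8 else v)"

lemma item_weight_nonneg: "0 \<le> v \<Longrightarrow> 0 \<le> item_weight v"
  unfolding item_weight_def by simp

lemma item_weight_split:
  assumes "0 < v" "v < 1"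
  shows "item_weight v = (if item_class v = 2 then 3/4 else 0) + (if item_class v = 3 then 1/2 else 0)
    + (if item_class v = 4 then 3/8 else 0) + (if v < 1/4 then v else 0)"
  using item_class_eq_iff[OF assms(1), of 2] item_class_eq_iff[OF assms(1), of 3]
    item_class_eq_iff[OF assms(1), of 4] assms
  unfolding item_weight_def by auto

lemma finite_bin_items [simp]: "finite (bin_items xs f b)"
  unfolding bin_items_def by simp

lemma bin_small_load_single_big:
  assumes "i \<in> bin_items xs f b" "1/4 \<le> xs ! i" "\<forall>j\<in>bin_items xs f b - {i}. xs ! j < 1/4"
  shows "bin_small_load xs f b = (\<Sum>j\<in>bin_items xs f b - {i}. xs ! j)"
proof -
  have "{j\<in>smalls xs (length xs). f j = b} = bin_items xs f b - {i}"
    using assms unfolding smalls_def bin_items_def by fastforce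
  then show ?thesis unfolding bin_small_load_def by simp
qed

lemma tight_item_small_load:
  assumes "i \<in> tight_items xs f"
  shows "1 - xs ! i \<le> bin_small_load xs f (f i)" "bin_small_load xs f (f i) < 1/4"
proof -
  have i: "i \<in> bin_items xs f (f i)" using assms unfolding tight_items_def bin_items_def by simp
  have "(\<Sum>j\<in>bin_items xs f (f i). xs ! j) = xs ! i + (\<Sum>j\<in>bin_items xs f (f i) - {i}. xs ! j)"
    using i by (simp add: sum.remove)
  also have "\<dots> = xs ! i + bin_small_load xs f (f i)"
    using assms i by (subst bin_small_load_single_big[of i]) (auto simp: tight_items_def)
  finally show "1 - xs ! i \<le> bin_small_load xs f (f i)"
    using assms unfolding tight_items_def by simp
  show "bin_small_load xs f (f i) < 1/4"
    using assms unfolding tight_items_def by simp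
qed

lemma tight_item_gt: "i \<in> tight_items xs f \<Longrightarrow> 3/4 < xs ! i"
  using tight_item_small_load[of i xs f] by simp

lemma tight_items_subset: "tight_items xs f \<subseteq> {..<length xs}"
  unfolding tight_items_def by auto

lemma inj_on_tight_items: "inj_on f (tight_items xs f)"
proof (rule inj_onI)
  fix i j assume ij: "i \<in> tight_items xs f" "j \<in> tight_items xs f" "f i = f j"
  then have "j \<in> bin_items xs f (f i)" "\<not> xs ! j < 1/4"
    unfolding tight_items_def bin_items_def by auto
  then show "i = j" using ij(1) unfolding tight_items_def by auto
qed

lemma sum_item_weight_ge_sum:
  "\<forall>i\<in>A. xs ! i < 1/2 \<Longrightarrow> (\<Sum>i\<in>A. xs ! i) \<le> (\<Sum>i\<in>A. item_weight (xs ! i))"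
  by (intro sum_mono) (auto simp: item_weight_def)

lemma sum_item_weight_ge_two:
  assumes "finite A" "i \<in> A" "j \<in> A" "i \<noteq> j" "1/2 \<le> xs ! i" "1/4 \<le> xs ! j"
    and nonneg: "\<forall>k\<in>A. 0 \<le> xs ! k"
  shows "9/8 \<le> (\<Sum>k\<in>A. item_weight (xs ! k))"
proof -
  have "9/8 \<le> item_weight (xs ! i) + item_weight (xs ! j)"
    using assms unfolding item_weight_def by auto
  also have "\<dots> = (\<Sum>k\<in>{i, j}. item_weight (xs ! k))"
    using assms by simp
  also have "\<dots> \<le> (\<Sum>k\<in>A. item_weight (xs ! k))"
    using assms nonneg by (intro sum_mono2) (auto intro: item_weight_nonneg)
  finally show ?thesis .
qed

lemma sum_item_weight_single_big:
  assumes "finite A" "i \<in> A" "1/2 \<le> xs ! i" "\<forall>j\<in>A - {i}. xs ! j < 1/4"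
  shows "(\<Sum>k\<in>A. item_weight (xs ! k)) = 3/4 + (\<Sum>j\<in>A - {i}. xs ! j)"
proof -
  have "(\<Sum>k\<in>A. item_weight (xs ! k)) = item_weight (xs ! i) + (\<Sum>j\<in>A - {i}. item_weight (xs ! j))"
    using assms by (simp add: sum.remove)
  also have "(\<Sum>j\<in>A - {i}. item_weight (xs ! j)) = (\<Sum>j\<in>A - {i}. xs ! j)"
  proof (rule sum.cong)
    fix j assume "j \<in> A - {i}"
    then have "xs ! j < 1/4" using assms(4) by blast
    then show "item_weight (xs ! j) = xs ! j" by (simp add: item_weight_def)
  qed simp
  finally show ?thesis
    using assms(3) by (simp add: item_weight_def)
qed

lemma bin_weight_ge:
  assumes items: "\<forall>v\<in>set xs. 0 < v \<and> v < 1"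
    and covered: "1 \<le> (\<Sum>i\<in>bin_items xs f b. xs ! i)"
  shows "1 \<le> (\<Sum>i\<in>bin_items xs f b. item_weight (xs ! i))
    + (if b \<in> f ` tight_items xs f then 1/4 - bin_small_load xs f b else 0)"
proof -
  let ?B = "bin_items xs f b"
  have nonneg: "\<forall>i\<in>?B. 0 \<le> xs ! i"
    using items unfolding bin_items_def by (auto intro: less_imp_le)
  have extra: "0 \<le> (if b \<in> f ` tight_items xs f then 1/4 - bin_small_load xs f b else 0)"
    using tight_item_small_load(2)[of _ xs f] by (auto simp: less_imp_le)
  show ?thesis
  proof (cases "\<exists>i\<in>?B. 1/2 \<le> xs ! i")
    case False
    then show ?thesis
      using sum_item_weight_ge_sum[of ?B xs] covered extra by (auto simp: not_le)
  next
    case True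
    then obtain i where i: "i \<in> ?B" "1/2 \<le> xs ! i" by blast
    show ?thesis
    proof (cases "\<exists>j\<in>?B - {i}. 1/4 \<le> xs ! j")
      case True
      then obtain j where "j \<in> ?B" "i \<noteq> j" "1/4 \<le> xs ! j" by auto
      then have "9/8 \<le> (\<Sum>k\<in>?B. item_weight (xs ! k))"
        using sum_item_weight_ge_two[of ?B i j xs] i nonneg by simp
      then show ?thesis using extra by linarith
    next
      case False
      then have small: "\<forall>j\<in>?B - {i}. xs ! j < 1/4" by (simp add: not_le)
      then have W: "(\<Sum>k\<in>?B. item_weight (xs ! k)) = 3/4 + bin_small_load xs f b"
        using i sum_item_weight_single_big[of ?B i xs] bin_small_load_single_big[of i xs f b] by simp
      show ?thesis
      proof (cases "bin_small_load xs f b < 1/4")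
        case True
        have "b = f i" using i unfolding bin_items_def by simp
        then have "i \<in> tight_items xs f"
          using i small True covered unfolding tight_items_def bin_items_def by auto
        then have "b \<in> f ` tight_items xs f" using \<open>b = f i\<close> by blast
        then show ?thesis using W by simp
      qed (use W extra in simp)
    qed
  qed
qed

lemma sum_if_nth:
  "(\<Sum>i<length xs. if P (xs ! i) then c else 0) = of_nat (length (filter P xs)) * (c :: rat)"
  by (simp add: sum.inter_filter[symmetric] length_filter_conv_card lessThan_def)

lemma sum_item_weight:
  assumes items: "\<forall>v\<in>set xs. 0 < v \<and> v < 1"
  shows "(\<Sum>i<length xs. item_weight (xs ! i)) = 3/4 * of_nat (n_class xs 2)
    + 1/2 * of_nat (n_class xs 3) + 3/8 * of_nat (n_class xs 4) + small_sum xs (length xs)"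
proof -
  have "small_sum xs (length xs) = (\<Sum>i<length xs. if xs ! i < 1/4 then xs ! i else 0)"
    unfolding small_sum_def smalls_def by (simp add: sum.inter_filter[symmetric] lessThan_def)
  moreover have "(\<Sum>i<length xs. item_weight (xs ! i))
    = (\<Sum>i<length xs. (if item_class (xs ! i) = 2 then 3/4 else 0)
        + (if item_class (xs ! i) = 3 then 1/2 else 0)
        + (if item_class (xs ! i) = 4 then 3/8 else 0) + (if xs ! i < 1/4 then xs ! i else 0))"
  proof (rule sum.cong)
    fix i assume "i \<in> {..<length xs}"
    then have "xs ! i \<in> set xs" by simp
    then show "item_weight (xs ! i) = (if item_class (xs ! i) = 2 then 3/4 else 0)
        + (if item_class (xs ! i) = 3 then 1/2 else 0)
        + (if item_class (xs ! i) = 4 then 3/8 else 0) + (if xs ! i < 1/4 then xs ! i else 0)"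
      using items by (intro item_weight_split) auto
  qed simp
  ultimately show ?thesis
    using sum_if_nth[of "\<lambda>v. item_class v = 2"] sum_if_nth[of "\<lambda>v. item_class v = 3"]
      sum_if_nth[of "\<lambda>v. item_class v = 4"]
    unfolding n_class_def by (simp add: sum.distrib)
qed

lemma sum_small_load_eq:
  assumes "A \<subseteq> tight_items xs f"
  shows "(\<Sum>i\<in>A. bin_small_load xs f (f i))
    = (\<Sum>j\<in>{j\<in>smalls xs (length xs). f j \<in> f ` A}. xs ! j)"
proof -
  let ?J = "{j\<in>smalls xs (length xs). f j \<in> f ` A}"
  have fin: "finite A"
    using assms by (rule finite_subset) (auto simp: tight_items_def)
  have "(\<Sum>i\<in>A. bin_small_load xs f (f i)) = (\<Sum>b\<in>f ` A. bin_small_load xs f b)"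
    using inj_on_subset[OF inj_on_tight_items assms] by (simp add: sum.reindex)
  also have "\<dots> = (\<Sum>b\<in>f ` A. \<Sum>j\<in>{j. j \<in> ?J \<and> f j = b}. xs ! j)"
    unfolding bin_small_load_def by (intro sum.cong refl arg_cong[where f = "sum _"]) auto
  also have "\<dots> = (\<Sum>j\<in>?J. xs ! j)"
    using fin by (intro sum.group) auto
  finally show ?thesis .
qed

lemma small_sum_tight_bins:
  "(\<Sum>i\<in>tight_items xs f. bin_small_load xs f (f i))
    = small_sum xs (length xs) - loose_small_sum xs f"
proof -
  let ?S = "smalls xs (length xs)"
  have "(\<Sum>i\<in>tight_items xs f. bin_small_load xs f (f i))
      = (\<Sum>j\<in>{j\<in>?S. f j \<in> f ` tight_items xs f}. xs ! j)"
    by (rule sum_small_load_eq) simp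
  also have "\<dots> = small_sum xs (length xs) - loose_small_sum xs f"
    unfolding small_sum_def loose_small_sum_def
    using sum.Int_Diff[of ?S "\<lambda>i. xs ! i" "{i. f i \<in> f ` tight_items xs f}"]
    by (simp add: set_diff_eq Int_def)
  finally show ?thesis .
qed

lemma covered_bins_subset: "{b. 1 \<le> (\<Sum>i\<in>bin_items xs f b. xs ! i)} \<subseteq> f ` {..<length xs}"
proof
  fix b assume "b \<in> {b. 1 \<le> (\<Sum>i\<in>bin_items xs f b. xs ! i)}"
  then have "bin_items xs f b \<noteq> {}" by auto
  then show "b \<in> f ` {..<length xs}" unfolding bin_items_def by auto
qed

lemma sum_weight_covered_bins_le:
  assumes items: "\<forall>v\<in>set xs. 0 < v \<and> v < 1"
  shows "(\<Sum>b | 1 \<le> (\<Sum>i\<in>bin_items xs f b. xs ! i). \<Sum>i\<in>bin_items xs f b. item_weight (xs ! i))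
    \<le> (\<Sum>i<length xs. item_weight (xs ! i))"
proof -
  have "(\<Sum>b | 1 \<le> (\<Sum>i\<in>bin_items xs f b. xs ! i). \<Sum>i\<in>bin_items xs f b. item_weight (xs ! i))
      \<le> (\<Sum>b\<in>f ` {..<length xs}. \<Sum>i\<in>bin_items xs f b. item_weight (xs ! i))"
  proof (intro sum_mono2 sum_nonneg)
    fix b i assume "i \<in> bin_items xs f b"
    then have "xs ! i \<in> set xs" unfolding bin_items_def by simp
    then show "0 \<le> item_weight (xs ! i)"
      using items by (simp add: item_weight_nonneg less_imp_le)
  qed (use covered_bins_subset in auto)
  also have "\<dots> = (\<Sum>i<length xs. item_weight (xs ! i))"
    using sum.group[of "{..<length xs}" "f ` {..<length xs}" f "\<lambda>i. item_weight (xs ! i)"]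
    unfolding bin_items_def by simp
  finally show ?thesis .
qed

lemma covered_bins_le_weight:
  assumes items: "\<forall>v\<in>set xs. 0 < v \<and> v < 1"
  shows "of_nat (covered_bins xs f) \<le> weight_bound xs f"
proof -
  let ?C = "{b. 1 \<le> (\<Sum>i\<in>bin_items xs f b. xs ! i)}"
  let ?T = "f ` tight_items xs f"
  have finC: "finite ?C"
    using covered_bins_subset by (rule finite_subset) simp
  have T_sub: "?T \<subseteq> ?C"
    unfolding tight_items_def by auto
  have "of_nat (covered_bins xs f) = (\<Sum>b\<in>?C. (1::rat))"
    unfolding covered_bins_def bin_items_def by simp
  also have "\<dots> \<le> (\<Sum>b\<in>?C. (\<Sum>i\<in>bin_items xs f b. item_weight (xs ! i))
      + (if b \<in> ?T then 1/4 - bin_small_load xs f b else 0))"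
    using bin_weight_ge[OF items] by (intro sum_mono) simp
  also have "\<dots> = (\<Sum>b\<in>?C. \<Sum>i\<in>bin_items xs f b. item_weight (xs ! i))
      + (\<Sum>b\<in>?T. 1/4 - bin_small_load xs f b)"
    using T_sub finC by (simp add: sum.distrib sum.If_cases Int_absorb1)
  also have "(\<Sum>b\<in>?T. 1/4 - bin_small_load xs f b)
      = (\<Sum>i\<in>tight_items xs f. 1/4 - bin_small_load xs f (f i))"
    using inj_on_tight_items by (simp add: sum.reindex)
  finally show ?thesis
    using sum_weight_covered_bins_le[OF items, of f] sum_item_weight[OF items]
      small_sum_tight_bins[of xs f]
    unfolding weight_bound_def by (simp add: sum_subtractf)
qed

lemma covered_bins_le_length: "covered_bins xs f \<le> length xs"
proof -
  have "covered_bins xs f \<le> card (f ` {..<length xs})"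
    unfolding covered_bins_def bin_items_def[symmetric] using covered_bins_subset
    by (intro card_mono) auto
  also have "\<dots> \<le> length xs"
    using card_image_le[of "{..<length xs}" f] by simp
  finally show ?thesis .
qed

lemma opt_cover_attained:
  obtains f where "opt_cover xs = covered_bins xs f"
proof -
  have "{c. \<exists>f. c = covered_bins xs f} \<subseteq> {..length xs}"
    using covered_bins_le_length by auto
  then have "finite {c. \<exists>f. c = covered_bins xs f}"
    by (rule finite_subset) simp
  then have "opt_cover xs \<in> {c. \<exists>f. c = covered_bins xs f}"
    unfolding opt_cover_def by (intro Max_in) auto
  then show thesis using that by blast
qed

section \<open>Tight bins against the runs\<close>

lemma card_tight_meeting_le:
  assumes G: "G \<subseteq> tight_items xs f" and "finite CL"
  shows "card {i\<in>G. f i \<in> f ` CL} \<le> card {j\<in>CL. f j \<in> f ` tight_items xs f}"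
proof -
  let ?H = "{i\<in>G. f i \<in> f ` CL}"
  let ?T = "f ` tight_items xs f"
  have "?H \<subseteq> tight_items xs f" using G by auto
  then have "card ?H = card (f ` ?H)"
    by (intro card_image[symmetric] inj_on_subset[OF inj_on_tight_items])
  also have "\<dots> \<le> card (f ` {j\<in>CL. f j \<in> ?T})"
  proof (rule card_mono)
    show "f ` ?H \<subseteq> f ` {j\<in>CL. f j \<in> ?T}"
    proof
      fix b assume "b \<in> f ` ?H"
      then obtain i j where ij: "i \<in> G" "j \<in> CL" "b = f i" "f j = f i"
        by auto
      then have "j \<in> {j\<in>CL. f j \<in> ?T}" using G by auto
      then show "b \<in> f ` {j\<in>CL. f j \<in> ?T}" using ij by (metis image_eqI)
    qed
  qed (use \<open>finite CL\<close> in simp)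
  also have "\<dots> \<le> card {j\<in>CL. f j \<in> ?T}"
    using \<open>finite CL\<close> by (intro card_image_le) simp
  finally show ?thesis .
qed

lemma sum_smalls_diff_ge:
  assumes items: "\<forall>v\<in>set xs. 0 < v \<and> v < 1"
    and CL: "CL \<subseteq> smalls xs (length xs)" and G: "G \<subseteq> tight_items xs f"
    and room: "\<forall>i\<in>G. \<tau> \<le> bin_small_load xs f (f i)" and "0 \<le> \<tau>"
  shows "(of_nat (card G) - of_nat (card {j\<in>CL. f j \<in> f ` tight_items xs f})) * \<tau>
      + (\<Sum>j\<in>{j\<in>smalls xs (length xs) - CL. f j \<notin> f ` tight_items xs f}. xs ! j)
    \<le> (\<Sum>j\<in>smalls xs (length xs) - CL. xs ! j)"
proof -
  let ?S = "smalls xs (length xs)"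
  let ?T = "f ` tight_items xs f"
  define H where "H = {i\<in>G. f i \<in> f ` CL}"
  define A1 where "A1 = {j\<in>?S. f j \<in> f ` (G - H)}"
  define A2 where "A2 = {j\<in>?S - CL. f j \<notin> ?T}"
  have finG: "finite G"
    using G by (rule finite_subset) (auto simp: tight_items_def)
  have finCL: "finite CL" using CL by (rule finite_subset) simp
  have cardH: "card H \<le> card {j\<in>CL. f j \<in> ?T}"
    unfolding H_def using G finCL by (rule card_tight_meeting_le)
  have "(of_nat (card G) - of_nat (card {j\<in>CL. f j \<in> ?T})) * \<tau> \<le> of_nat (card (G - H)) * \<tau>"
    using cardH finG \<open>0 \<le> \<tau>\<close> unfolding H_def
    by (intro mult_right_mono) (auto simp: card_Diff_subset of_nat_diff)
  also have "\<dots> \<le> (\<Sum>i\<in>G - H. bin_small_load xs f (f i))"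
    using room sum_mono[of "G - H" "\<lambda>_. \<tau>"] by simp
  also have "\<dots> = (\<Sum>j\<in>A1. xs ! j)"
    unfolding A1_def using G by (intro sum_small_load_eq) auto
  finally have A1_ge: "(of_nat (card G) - of_nat (card {j\<in>CL. f j \<in> ?T})) * \<tau> \<le> (\<Sum>j\<in>A1. xs ! j)" .
  have "A1 \<subseteq> ?S - CL"
  proof
    fix j assume "j \<in> A1"
    then obtain i where j: "j \<in> ?S" "i \<in> G - H" "f j = f i"
      unfolding A1_def by auto
    then have "j \<notin> CL" unfolding H_def by (metis (mono_tags, lifting) DiffE image_eqI mem_Collect_eq)
    with j show "j \<in> ?S - CL" by simp
  qed
  moreover have "A2 \<subseteq> ?S - CL" "A1 \<inter> A2 = {}"
    using G unfolding A1_def A2_def by auto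
  ultimately have sub: "A1 \<union> A2 \<subseteq> ?S - CL" and disj: "A1 \<inter> A2 = {}" by auto
  then have "(\<Sum>j\<in>A1. xs ! j) + (\<Sum>j\<in>A2. xs ! j) = (\<Sum>j\<in>A1 \<union> A2. xs ! j)"
    by (intro sum.union_disjoint[symmetric]) (auto intro: finite_subset)
  also have "\<dots> \<le> (\<Sum>j\<in>?S - CL. xs ! j)"
    using sub smalls_nonneg[OF items] by (intro sum_mono2) auto
  finally have "(\<Sum>j\<in>A1. xs ! j) + (\<Sum>j\<in>A2. xs ! j) \<le> (\<Sum>j\<in>?S - CL. xs ! j)" .
  then show ?thesis using A1_ge unfolding A2_def by simp
qed

lemma xm_of_card_tight_items:
  assumes "1 \<le> card (tight_items xs f)"
  shows "3/4 < xm_of xs (card (tight_items xs f))"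
proof (rule less_xm_of[OF assms])
  have "{i\<in>tight_items xs f. 3/4 < xs ! i} = tight_items xs f"
    using tight_item_gt by blast
  then show "card (tight_items xs f) \<le> length (filter (\<lambda>v. 3/4 < v) xs)"
    using card_filter_le_length_filter[OF tight_items_subset[of xs f], where P = "\<lambda>v. 3/4 < v"] by simp
qed

lemma card_tight_items_le: "card (tight_items xs f) \<le> n_two_items xs"
proof -
  have "{i\<in>tight_items xs f. 1/2 \<le> xs ! i} = tight_items xs f"
    unfolding tight_items_def by blast
  then show ?thesis
    using card_filter_le_length_filter[OF tight_items_subset[of xs f], where P = "(\<le>) (1/2)"]
    unfolding n_two_items_def by simp
qed

lemma four_mult_le_of_less_mult:
  fixes a P \<tau> :: "'a :: linordered_field"
  assumes "0 \<le> a" "a < P * \<tau>" "0 < \<tau>" "\<tau> < 1/4"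
  shows "4 * a \<le> P"
proof -
  have "0 < P * \<tau>" using assms by linarith
  then have "0 < P" using assms(3) by (simp add: zero_less_mult_iff)
  then have "P * \<tau> \<le> P * (1/4)" using assms by (intro mult_left_mono) auto
  then show ?thesis using assms by simp
qed

lemma loose_small_sum_split:
  assumes "CL \<subseteq> smalls xs (length xs)"
  shows "loose_small_sum xs f
    = (\<Sum>j\<in>{j\<in>smalls xs (length xs) - CL. f j \<notin> f ` tight_items xs f}. xs ! j)
      + (\<Sum>j\<in>{j\<in>CL. f j \<notin> f ` tight_items xs f}. xs ! j)"
proof -
  have "finite CL" using assms by (rule finite_subset) simp
  moreover have "{j\<in>smalls xs (length xs). f j \<notin> f ` tight_items xs f}
      = {j\<in>smalls xs (length xs) - CL. f j \<notin> f ` tight_items xs f} \<union> {j\<in>CL. f j \<notin> f ` tight_items xs f}"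
    using assms by auto
  ultimately show ?thesis
    unfolding loose_small_sum_def by (simp only:) (subst sum.union_disjoint, auto)
qed

lemma loose_small_sum_le:
  assumes items: "\<forall>v\<in>set xs. 0 < v \<and> v < 1" and x: "x < 1"
    and m: "m \<le> card (tight_items xs f)"
    and CL: "CL \<subseteq> smalls xs (length xs)" "card CL < m"
    and rest: "(\<Sum>i\<in>smalls xs (length xs) - CL. xs ! i) < of_nat m * (1 - x)"
    and above: "card {i\<in>tight_items xs f. x < xs ! i} < m"
  shows "4 * loose_small_sum xs f \<le> 3 * of_nat m - 2 - of_nat (card (tight_items xs f))"
proof -
  let ?I = "tight_items xs f"
  define G where "G = {i\<in>?I. xs ! i \<le> x}"
  define CLQ where "CLQ = {j\<in>CL. f j \<in> f ` ?I}"
  define CLO where "CLO = {j\<in>CL. f j \<notin> f ` ?I}"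
  define A where "A = (\<Sum>j\<in>{j\<in>smalls xs (length xs) - CL. f j \<notin> f ` ?I}. xs ! j)"
  have finCL: "finite CL" using CL(1) by (rule finite_subset) simp
  have "card ?I = card G + card {i\<in>?I. x < xs ! i}"
    unfolding G_def using tight_items_subset[of xs f]
    by (subst card_Un_disjoint[symmetric]) (auto intro: arg_cong[where f = card] finite_subset)
  then have cardG: "of_nat (card ?I) - of_nat m + 1 \<le> (of_nat (card G) :: rat)"
    using above by linarith
  have room: "\<forall>i\<in>G. 1 - x \<le> bin_small_load xs f (f i)"
    using tight_item_small_load(1) unfolding G_def by fastforce
  have "G \<noteq> {}" using cardG m by auto
  then have x4: "1 - x < 1/4"
    using room tight_item_small_load(2) unfolding G_def by fastforce
  have "(of_nat (card G) - of_nat (card CLQ)) * (1 - x) + A \<le> (\<Sum>j\<in>smalls xs (length xs) - CL. xs ! j)"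
    unfolding CLQ_def A_def using items CL(1) x room
    by (intro sum_smalls_diff_ge) (auto simp: G_def)
  moreover have "(of_nat (card ?I) - of_nat m + 1) * (1 - x) \<le> of_nat (card G) * (1 - x)"
    using cardG x by (intro mult_right_mono) auto
  ultimately have "A < (2 * of_nat m - 1 - of_nat (card ?I) + of_nat (card CLQ)) * (1 - x)"
    using rest unfolding left_diff_distrib distrib_right by linarith
  moreover have "0 \<le> A"
    unfolding A_def using smalls_nonneg[OF items] by (intro sum_nonneg) auto
  ultimately have "4 * A \<le> 2 * of_nat m - 1 - of_nat (card ?I) + of_nat (card CLQ)"
    using x x4 by (intro four_mult_le_of_less_mult) auto
  moreover have "4 * (\<Sum>j\<in>CLO. xs ! j) \<le> of_nat (card CLO)"
    using sum_mono[of CLO "\<lambda>j. xs ! j" "\<lambda>_. 1/4"] CL(1) unfolding CLO_def smalls_def by force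
  moreover have "card CLQ + card CLO = card CL"
    unfolding CLQ_def CLO_def using finCL
    by (subst card_Un_disjoint[symmetric]) (auto intro: arg_cong[where f = card])
  then have "of_nat (card CLQ) + of_nat (card CLO) = (of_nat (card CL) :: rat)"
    by (metis of_nat_add)
  moreover have "of_nat (card CL) + 1 \<le> (of_nat m :: rat)"
    using CL(2) by (metis Suc_leI of_nat_Suc of_nat_le_iff add.commute)
  ultimately show ?thesis
    using loose_small_sum_split[OF CL(1), of f] unfolding A_def CLO_def by linarith
qed

lemma last_crit_full_cases:
  assumes items: "\<forall>v\<in>set xs. 0 < v \<and> v < 1"
    and m: "m \<le> card (tight_items xs f)"
    and next_not_full: "m < card (tight_items xs f) \<longrightarrow> \<not> crit_full xs (Suc m)"
  obtains "m = card (tight_items xs f)" "of_nat m * (5/4 - xm_of xs m) \<le> of_nat m / (2 :: rat)"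
    | "4 * loose_small_sum xs f \<le> 3 * of_nat m + 1 - of_nat (card (tight_items xs f))"
proof (cases "m = card (tight_items xs f)")
  case True
  have "of_nat m * (5/4 - xm_of xs m) \<le> of_nat m * (1/2 :: rat)"
  proof (cases "m = 0")
    case False
    then have "3/4 < xm_of xs m"
      using xm_of_card_tight_items[of xs f] True by simp
    then show ?thesis by (intro mult_left_mono) auto
  qed simp
  then show thesis using that(1) True by simp
next
  case False
  let ?x = "xm_of xs (Suc m)"
  have m': "Suc m \<le> card (tight_items xs f)" using m False by simp
  have n2: "Suc m \<le> n_two_items xs"
    using m' card_tight_items_le le_trans by blast
  then have len: "Suc m \<le> length xs"
    unfolding n_two_items_def using length_filter_le le_trans by blast
  obtain CL where CL: "CL \<subseteq> smalls xs (length xs)" "card CL < Suc m"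
    "(\<Sum>i\<in>smalls xs (length xs) - CL. xs ! i) < of_nat (Suc m) * (1 - ?x)"
    using dh_completing_smalls[OF items n2] next_not_full m' by auto
  have "?x < 1"
    using xm_of_mem[OF _ len] items by auto
  moreover have "card {i\<in>tight_items xs f. ?x < xs ! i} < Suc m"
    using card_filter_le_length_filter[OF tight_items_subset[of xs f], where P = "\<lambda>v. ?x < v"]
      length_filter_xm_of_less[OF _ len] by simp
  ultimately have "4 * loose_small_sum xs f \<le> 3 * of_nat (Suc m) - 2 - of_nat (card (tight_items xs f))"
    using m' CL by (intro loose_small_sum_le[OF items]) auto
  then show thesis using that(2) by simp
qed

lemma dh_run_le_advice: "m \<le> n_two_items xs \<Longrightarrow> dh_run k xs m \<le> dh_advice k xs"
  unfolding dh_advice_def by (intro Max_ge) auto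

lemma dh_run_ge_weight:
  assumes items: "\<forall>v\<in>set xs. 0 < v \<and> v < 1"
    and m: "m \<le> card (tight_items xs f)" "crit_full xs m"
      "m < card (tight_items xs f) \<longrightarrow> \<not> crit_full xs (Suc m)"
  shows "2/3 * weight_bound xs f - 173/60 \<le> of_nat (dh_run 4 xs m)"
proof -
  define M where "M = max 0 (small_sum xs (length xs) - of_nat m * (5/4 - xm_of xs m))"
  have "m \<le> n_two_items xs"
    using m(1) card_tight_items_le[of xs f] by linarith
  then have run: "of_nat m / 2 + of_nat (n_class xs 2) / 2 + of_nat (n_class xs 3) / 3
      + of_nat (n_class xs 4) / 4 + 4/5 * M - 163/60 \<le> (of_nat (dh_run 4 xs m) :: rat)"
    unfolding M_def by (rule dh_run_ge[OF items _ m(2)])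
  have M: "0 \<le> M" "small_sum xs (length xs) - of_nat m * (5/4 - xm_of xs m) \<le> M"
    unfolding M_def by simp_all
  have loose: "loose_small_sum xs f \<le> small_sum xs (length xs)"
    unfolding loose_small_sum_def small_sum_def using smalls_nonneg[OF items]
    by (intro sum_mono2) auto
  have "2/3 * weight_bound xs f = of_nat (n_class xs 2) / 2 + of_nat (n_class xs 3) / 3 + of_nat (n_class xs 4) / 4
      + of_nat (card (tight_items xs f)) / 6 + 2/3 * loose_small_sum xs f"
    unfolding weight_bound_def by (simp add: algebra_simps)
  moreover have "of_nat (card (tight_items xs f)) = (of_nat m :: rat)
      \<and> 2/3 * loose_small_sum xs f \<le> of_nat m / 3 + 4/5 * M + 1/6
    \<or> 4 * loose_small_sum xs f \<le> 3 * of_nat m + 1 - of_nat (card (tight_items xs f))"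
  proof (rule last_crit_full_cases[OF items m(1) m(3)])
    assume q: "m = card (tight_items xs f)"
      and "of_nat m * (5/4 - xm_of xs m) \<le> of_nat m / (2 :: rat)"
    then have "loose_small_sum xs f - of_nat m / 2 \<le> M"
      using M(2) loose by linarith
    then show ?thesis
      using M(1) q by simp
  next
    assume "4 * loose_small_sum xs f \<le> 3 * of_nat m + 1 - of_nat (card (tight_items xs f))"
    then show ?thesis by (rule disjI2)
  qed
  ultimately show ?thesis
    using run M(1) by (elim disjE conjE) linarith+
qed

theorem lemma2:
  fixes xs :: "rat list"
  assumes "\<forall>v\<in>set xs. 0 < v \<and> v < 1"
  shows "of_nat (dh_advice 4 xs) \<ge> (2/3) * of_nat (opt_cover xs) - (173/60 :: rat)"
proof -
  obtain f where opt: "opt_cover xs = covered_bins xs f"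
    by (rule opt_cover_attained)
  obtain m where m: "m \<le> card (tight_items xs f)" "crit_full xs m"
    "m < card (tight_items xs f) \<longrightarrow> \<not> crit_full xs (Suc m)"
    using obtain_last_le[of "crit_full xs", OF crit_full_0[OF assms]] by blast
  have "m \<le> n_two_items xs"
    using m(1) card_tight_items_le[of xs f] by linarith
  then have "(of_nat (dh_run 4 xs m) :: rat) \<le> of_nat (dh_advice 4 xs)"
    by (simp add: dh_run_le_advice)
  then show ?thesis
    using dh_run_ge_weight[OF assms m] covered_bins_le_weight[OF assms, of f]
    unfolding opt by linarith
qed

end
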